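(* Let $n$ be an integer and let $\omega\in\mathbb C$ be a root of $\Delta_n=S_n'S_{n-1}-S_nS_{n-1}'$. If $n>0$ then $|h_n(\omega)|>1$, and if $n<0$ then $|h_n(\omega)|<1$, where $h_n=S_n/S_{n-1}$.
   Context: The Chebyshev polynomials $S_j(\omega)$ are defined for all integers $j$ by $S_0=1$, $S_1=\omega$, $S_{j+1}=\omega S_j-S_{j-1}$; primes denote derivatives with respect to $\omega$. *)

theory Defs
  imports "HOL-Computational_Algebra.Polynomial" Complex_Main
begin

fun cheb_S_nat :: "nat \<Rightarrow> complex poly" where
  "cheb_S_nat 0 = 1"
| "cheb_S_nat (Suc 0) = [:0, 1:]"
| "cheb_S_nat (Suc (Suc n)) = [:0, 1:] * cheb_S_nat (Suc n) - cheb_S_nat n"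

text \<open>Extension to all integers j by running the recurrence backwards:
  S_(-1) = 0 and S_(-k) = - S_(k-2) for k >= 2.\<close>
definition cheb_S :: "int \<Rightarrow> complex poly" where
  "cheb_S j = (if j \<ge> 0 then cheb_S_nat (nat j)
               else if j = -1 then 0 else - cheb_S_nat (nat (- j - 2)))"

definition Delta :: "int \<Rightarrow> complex poly" where
  "Delta n = pderiv (cheb_S n) * cheb_S (n - 1) - cheb_S n * pderiv (cheb_S (n - 1))"

definition h :: "int \<Rightarrow> complex \<Rightarrow> complex" where
  "h n w = poly (cheb_S n) w / poly (cheb_S (n - 1)) w"

end

theory Submission
  imports Defs
begin

text \<open>Write \<omega> = t + 1/t. Then (t - 1/t) S_k(\<omega>) = t^(k+1) - t^(-k-1), and by Christoffel--Darboux
  \<Delta>_(j+1) = S_0^2 + ... + S_j^2. At a root of \<Delta>_(j+1) the squares (t^(k+1) - t^(-k-1))^2 telescope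
  to T - 1/T = (2j+3)(t - 1/t) with T = t^(2j+3), while h_(j+1)(\<omega>) = (tT - 1)/(T - t). Taking
  imaginary parts gives Im t Im T \<ge> 0, and |T| = |t|^(2j+3) lies on the same side of 1 as |t|, so
  |tT - 1|^2 - |T - t|^2 = (|t|^2 - 1)(|T|^2 - 1) + 4 Im t Im T > 0; equality would force t = \<plusminus>1,
  i.e. \<omega> = \<plusminus>2, where the sum of squares is a positive integer. Negative indices reduce to positive
  ones: S_(-k) = -S_(k-2) gives \<Delta>_(-j-2) = -\<Delta>_(j+1) and h_(-j-2) = 1/h_(j+1).\<close>

lemma power_diff_sq_sum_telescope:
  fixes t s :: "'a::idom"
  assumes "t * s = 1"
  shows "(t - s) * (\<Sum>k<n. (t ^ Suc k - s ^ Suc k) ^ 2)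
     = t ^ (2 * n + 1) - s ^ (2 * n + 1) - of_nat (2 * n + 1) * (t - s)"
proof (induction n)
  case (Suc n)
  define u v where "u = t ^ n" and "v = s ^ n"
  have "u * v = 1" unfolding u_def v_def using assms by (metis power_mult_distrib power_one)
  then have step: "t * u * u - s * v * v - c * (t - s) + (t - s) * (t * u - s * v) ^ 2
      = t * t * t * u * u - s * s * s * v * v - (c + 2) * (t - s)" for c
    using assms by algebra
  have pow: "t ^ (2 * n + 1) = t * u * u" "s ^ (2 * n + 1) = s * v * v"
    "t ^ (2 * Suc n + 1) = t * t * t * u * u" "s ^ (2 * Suc n + 1) = s * s * s * v * v"
    by (simp_all add: u_def v_def power_mult power2_eq_square mult_ac)
  have "(t - s) * (\<Sum>k<Suc n. (t ^ Suc k - s ^ Suc k) ^ 2)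
      = (t - s) * (\<Sum>k<n. (t ^ Suc k - s ^ Suc k) ^ 2) + (t - s) * (t * u - s * v) ^ 2"
    by (simp add: u_def v_def distrib_left)
  also have "\<dots> = t * u * u - s * v * v - of_nat (2 * n + 1) * (t - s) + (t - s) * (t * u - s * v) ^ 2"
    unfolding Suc.IH pow ..
  also have "\<dots> = t ^ (2 * Suc n + 1) - s ^ (2 * Suc n + 1) - of_nat (2 * Suc n + 1) * (t - s)"
    unfolding step pow by simp
  finally show ?case .
qed simp

lemma diff_one_mult_power_diff_one_pos:
  fixes x :: real
  assumes "0 \<le> x" and "x \<noteq> 1" and "0 < m"
  shows "0 < (x - 1) * (x ^ m - 1)"
proof (cases "x < 1")
  case True
  then have "x ^ m < 1" using assms by (simp add: power_less_one_iff)
  with True show ?thesis by (simp add: mult_neg_neg)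
next
  case False
  then have "1 < x" using assms(2) by simp
  then have "1 < x ^ m" using assms(3) by (simp add: one_less_power)
  with \<open>1 < x\<close> show ?thesis by simp
qed

lemma Im_diff_inverse:
  fixes z :: complex
  shows "Im (z - inverse z) = Im z * (1 + 1 / (cmod z)\<^sup>2)"
  by (simp add: cmod_power2 algebra_simps)

lemma norm_mult_diff_one_sq_minus_norm_diff_sq:
  fixes t T :: complex
  shows "(cmod (t * T - 1))\<^sup>2 - (cmod (T - t))\<^sup>2
     = ((cmod t)\<^sup>2 - 1) * ((cmod T)\<^sup>2 - 1) + 4 * Im t * Im T"
  unfolding cmod_power2 by (simp add: power2_eq_square algebra_simps)

lemma Im_eq_0_norm_sq_one_imp_sq_eq_1:
  fixes t :: complex
  assumes "Im t = 0" and "(cmod t)\<^sup>2 = 1"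
  shows "t\<^sup>2 = 1"
proof -
  have "Re t * Re t = 1" using assms unfolding cmod_power2 by (simp add: power2_eq_square)
  then show ?thesis using assms(1) by (simp add: complex_eq_iff power2_eq_square)
qed

lemma Im_positive_multiple_if_diff_inverse_eq:
  fixes t T :: complex and c :: real
  assumes "0 < c" and "T - inverse T = of_real c * (t - inverse t)"
  obtains k where "0 < k" and "Im T = k * Im t"
proof -
  define a b where "a = 1 + 1 / (cmod T)\<^sup>2" and "b = 1 + 1 / (cmod t)\<^sup>2"
  have "0 < a" "0 < b"
    unfolding a_def b_def by (simp_all add: add_pos_nonneg)
  have "Im T * a = Im (T - inverse T)"
    unfolding a_def by (rule Im_diff_inverse[symmetric])
  also have "\<dots> = Im (of_real c * (t - inverse t))"
    by (simp only: assms(2))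
  also have "\<dots> = c * Im (t - inverse t)"
    by simp
  also have "\<dots> = c * (Im t * b)"
    unfolding b_def by (simp only: Im_diff_inverse)
  finally have "Im T = (c * b / a) * Im t"
    using \<open>0 < a\<close> by (simp add: field_simps)
  moreover have "0 < c * b / a"
    using \<open>0 < a\<close> \<open>0 < b\<close> \<open>0 < c\<close> by simp
  ultimately show ?thesis by (intro that)
qed

lemma norm_power_diff_lt_norm_mult_power_diff_one:
  fixes t :: complex and c :: real
  assumes "t \<noteq> 0" and "t\<^sup>2 \<noteq> 1" and "0 < m" and "0 < c"
    and "t ^ m - inverse (t ^ m) = of_real c * (t - inverse t)"
  shows "cmod (t ^ m - t) < cmod (t * t ^ m - 1)"
proof -
  define T where "T = t ^ m"
  obtain k where "0 < k" and ImT: "Im T = k * Im t"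
    using Im_positive_multiple_if_diff_inverse_eq[OF \<open>0 < c\<close> assms(5)[folded T_def]] .
  have norm_T: "(cmod T)\<^sup>2 = ((cmod t)\<^sup>2) ^ m"
    by (simp add: T_def norm_power flip: power_mult_distrib power_mult mult.commute)
  have norm_prod: "0 \<le> ((cmod t)\<^sup>2 - 1) * ((cmod T)\<^sup>2 - 1)"
    using diff_one_mult_power_diff_one_pos[of "(cmod t)\<^sup>2" m] \<open>0 < m\<close>
    by (cases "(cmod t)\<^sup>2 = 1") (auto simp: norm_T)
  have "0 < ((cmod t)\<^sup>2 - 1) * ((cmod T)\<^sup>2 - 1) + 4 * Im t * Im T"
  proof (cases "Im t = 0")
    case True
    then have "(cmod t)\<^sup>2 \<noteq> 1"
      using Im_eq_0_norm_sq_one_imp_sq_eq_1 assms(2) by blast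
    then show ?thesis
      using diff_one_mult_power_diff_one_pos[of "(cmod t)\<^sup>2" m] \<open>0 < m\<close> True
      by (simp add: norm_T)
  next
    case False
    have "Im t * Im T = k * (Im t)\<^sup>2"
      by (simp add: ImT power2_eq_square)
    with False \<open>0 < k\<close> have "0 < Im t * Im T"
      by simp
    with norm_prod show ?thesis by simp
  qed
  then have "(cmod (T - t))\<^sup>2 < (cmod (t * T - 1))\<^sup>2"
    using norm_mult_diff_one_sq_minus_norm_diff_sq[of t T] by simp
  then show ?thesis
    unfolding T_def by (rule power2_less_imp_less) simp
qed

lemma ex_joukowski_preimage:
  fixes \<omega> :: complex
  obtains t where "t \<noteq> 0" and "\<omega> = t + inverse t"
proof -
  define d where "d = csqrt (\<omega>\<^sup>2 - 4)"
  define t where "t = (\<omega> + d) / 2"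
  have "t * ((\<omega> - d) / 2) = (\<omega>\<^sup>2 - d\<^sup>2) / 4"
    unfolding t_def by (simp add: power2_eq_square algebra_simps)
  also have "\<dots> = 1"
    by (simp add: d_def)
  finally have prod: "t * ((\<omega> - d) / 2) = 1" .
  then have "t \<noteq> 0" by auto
  from prod have inv: "inverse t = (\<omega> - d) / 2" by (rule inverse_unique)
  have "\<omega> = t + inverse t"
    unfolding inv unfolding t_def by (simp flip: add_divide_distrib)
  with \<open>t \<noteq> 0\<close> show ?thesis by (rule that)
qed

lemma cheb_S_nat_christoffel_darboux:
  "pderiv (cheb_S_nat (Suc n)) * cheb_S_nat n - cheb_S_nat (Suc n) * pderiv (cheb_S_nat n)
     = (\<Sum>k\<le>n. cheb_S_nat k ^ 2)"
proof (induction n)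
  case 0
  show ?case by (simp add: pderiv_pCons)
next
  case (Suc n)
  define X :: "complex poly" where "X = [:0, 1:]"
  have rec: "cheb_S_nat (Suc (Suc n)) = X * cheb_S_nat (Suc n) - cheb_S_nat n"
    by (simp add: X_def)
  have der: "pderiv (X * cheb_S_nat (Suc n) - cheb_S_nat n) =
      cheb_S_nat (Suc n) + X * pderiv (cheb_S_nat (Suc n)) - pderiv (cheb_S_nat n)"
    by (simp add: X_def pderiv_mult pderiv_diff pderiv_pCons)
  show ?case
    using Suc.IH unfolding rec der by (simp add: algebra_simps power2_eq_square)
qed

lemma poly_cheb_S_nat_joukowski:
  fixes t s :: complex
  assumes "t * s = 1"
  shows "poly (cheb_S_nat k) (t + s) * (t - s) = t ^ Suc k - s ^ Suc k"
proof (induction k rule: cheb_S_nat.induct)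
  case 2
  show ?case using assms by (simp add: algebra_simps power2_eq_square)
next
  case (3 k)
  have "poly (cheb_S_nat (Suc (Suc k))) (t + s) * (t - s)
      = (t + s) * (poly (cheb_S_nat (Suc k)) (t + s) * (t - s)) - poly (cheb_S_nat k) (t + s) * (t - s)"
    by (simp add: algebra_simps)
  also have "\<dots> = (t + s) * (t ^ Suc (Suc k) - s ^ Suc (Suc k)) - (t ^ Suc k - s ^ Suc k)"
    using 3 by simp
  also have "\<dots> = t ^ Suc (Suc (Suc k)) - s ^ Suc (Suc (Suc k))
      + (t * s - 1) * (t ^ Suc k - s ^ Suc k)"
    by (simp add: algebra_simps)
  finally show ?case using assms by simp
qed simp

lemma poly_cheb_S_nat_double:
  fixes t :: complex
  assumes "t ^ 2 = 1"
  shows "poly (cheb_S_nat k) (2 * t) = of_nat (Suc k) * t ^ k"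
proof (induction k rule: cheb_S_nat.induct)
  case 2
  show ?case using assms by (simp add: power2_eq_square)
next
  case (3 k)
  have "poly (cheb_S_nat (Suc (Suc k))) (2 * t)
      = (2 * of_nat (Suc (Suc k)) * t ^ 2 - of_nat (Suc k)) * t ^ k"
    using 3 by (simp add: algebra_simps power2_eq_square)
  also have "\<dots> = of_nat (Suc (Suc (Suc k))) * t ^ k"
    using assms by (simp add: algebra_simps)
  also have "t ^ k = t ^ Suc (Suc k)"
    using assms power_add[of t 2 k] by simp
  finally show ?case .
qed simp

lemma sum_sq_cheb_S_nat_joukowski:
  fixes t s :: complex
  assumes "t * s = 1"
  shows "(t - s) ^ 3 * (\<Sum>k\<le>j. poly (cheb_S_nat k) (t + s) ^ 2)
     = t ^ (2 * j + 3) - s ^ (2 * j + 3) - of_nat (2 * j + 3) * (t - s)"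
proof -
  have "(t - s) ^ 3 * (\<Sum>k\<le>j. poly (cheb_S_nat k) (t + s) ^ 2)
      = (t - s) * (\<Sum>k\<le>j. (poly (cheb_S_nat k) (t + s) * (t - s)) ^ 2)"
    by (simp add: sum_distrib_left power_mult_distrib power3_eq_cube power2_eq_square mult_ac)
  also have "\<dots> = (t - s) * (\<Sum>k<Suc j. (t ^ Suc k - s ^ Suc k) ^ 2)"
    by (simp add: poly_cheb_S_nat_joukowski[OF assms] lessThan_Suc_atMost)
  also have "\<dots> = t ^ (2 * j + 3) - s ^ (2 * j + 3) - of_nat (2 * j + 3) * (t - s)"
  proof -
    have "2 * Suc j + 1 = 2 * j + 3" by simp
    then show ?thesis using power_diff_sq_sum_telescope[OF assms, of "Suc j"] by (simp only:)
  qed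
  finally show ?thesis .
qed

lemma sum_sq_cheb_S_nat_double_ne_zero:
  fixes t :: complex
  assumes "t ^ 2 = 1"
  shows "(\<Sum>k\<le>j. poly (cheb_S_nat k) (2 * t) ^ 2) \<noteq> 0"
proof -
  have "(t ^ k) ^ 2 = 1" for k
    using assms by (simp add: power2_eq_square flip: power_mult_distrib)
  then have "(\<Sum>k\<le>j. poly (cheb_S_nat k) (2 * t) ^ 2) = of_nat (\<Sum>k\<le>j. Suc k ^ 2)"
    by (simp add: poly_cheb_S_nat_double[OF assms] power_mult_distrib)
  moreover have "(\<Sum>k\<le>j. Suc k ^ 2) \<noteq> 0"
    by simp (blast intro: le0)
  ultimately show ?thesis by (metis of_nat_eq_0_iff)
qed

lemma cheb_S_nat_ratio_joukowski:
  fixes t s :: complex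
  assumes "t * s = 1" and "t \<noteq> s"
  shows "poly (cheb_S_nat (Suc j)) (t + s) / poly (cheb_S_nat j) (t + s)
     = (t * t ^ (2 * j + 3) - 1) / (t ^ (2 * j + 3) - t)"
proof -
  have t0: "t ^ Suc (Suc j) \<noteq> 0" using assms(1) by auto
  have cancel: "t ^ n * s ^ n = 1" for n
    using assms(1) by (simp flip: power_mult_distrib)
  have "Suc (Suc j) + Suc (Suc j) = Suc (2 * j + 3)" "Suc (Suc j) + Suc j = 2 * j + 3" by simp_all
  then have exps: "t ^ Suc (Suc j) * t ^ Suc (Suc j) = t * t ^ (2 * j + 3)"
      "t ^ Suc (Suc j) * t ^ Suc j = t ^ (2 * j + 3)"
    by (simp_all only: power_add[symmetric] power_Suc[symmetric])
  have num: "t ^ Suc (Suc j) * (t ^ Suc (Suc j) - s ^ Suc (Suc j)) = t * t ^ (2 * j + 3) - 1"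
    by (simp only: right_diff_distrib exps cancel)
  have "t ^ Suc (Suc j) * s ^ Suc j = t * (t ^ Suc j * s ^ Suc j)"
    by (simp only: power_Suc mult.assoc)
  then have den: "t ^ Suc (Suc j) * (t ^ Suc j - s ^ Suc j) = t ^ (2 * j + 3) - t"
    by (simp only: right_diff_distrib exps cancel mult_1_right)
  have "t - s \<noteq> 0" using assms(2) by simp
  have "poly (cheb_S_nat (Suc j)) (t + s) / poly (cheb_S_nat j) (t + s)
      = (poly (cheb_S_nat (Suc j)) (t + s) * (t - s)) / (poly (cheb_S_nat j) (t + s) * (t - s))"
    by (rule nonzero_mult_divide_mult_cancel_right[OF \<open>t - s \<noteq> 0\<close>, symmetric])
  also have "\<dots> = (t ^ Suc (Suc j) - s ^ Suc (Suc j)) / (t ^ Suc j - s ^ Suc j)"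
    by (simp only: poly_cheb_S_nat_joukowski[OF assms(1)])
  also have "\<dots> = (t ^ Suc (Suc j) * (t ^ Suc (Suc j) - s ^ Suc (Suc j)))
      / (t ^ Suc (Suc j) * (t ^ Suc j - s ^ Suc j))"
    by (rule nonzero_mult_divide_mult_cancel_left[OF t0, symmetric])
  also have "\<dots> = (t * t ^ (2 * j + 3) - 1) / (t ^ (2 * j + 3) - t)"
    by (simp only: num den)
  finally show ?thesis .
qed

lemma norm_cheb_S_nat_ratio_gt_one:
  fixes \<omega> :: complex
  assumes "(\<Sum>k\<le>j. poly (cheb_S_nat k) \<omega> ^ 2) = 0"
  shows "1 < cmod (poly (cheb_S_nat (Suc j)) \<omega> / poly (cheb_S_nat j) \<omega>)"
proof -
  obtain t where "t \<noteq> 0" and \<omega>: "\<omega> = t + inverse t"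
    by (rule ex_joukowski_preimage)
  define s where "s = inverse t"
  have ts: "t * s = 1" using \<open>t \<noteq> 0\<close> by (simp add: s_def)
  have "t\<^sup>2 \<noteq> 1"
  proof
    assume "t\<^sup>2 = 1"
    then have "inverse t = t" by (intro inverse_unique) (simp add: power2_eq_square)
    then have "\<omega> = 2 * t" using \<omega> by simp
    then show False
      using assms sum_sq_cheb_S_nat_double_ne_zero[OF \<open>t\<^sup>2 = 1\<close>] by simp
  qed
  then have "t \<noteq> s" using ts by (auto simp: power2_eq_square)
  define m where "m = 2 * j + 3"
  have "t ^ m - s ^ m = of_nat m * (t - s)"
    using sum_sq_cheb_S_nat_joukowski[OF ts, of j] assms by (simp add: m_def \<omega> s_def)
  then have diff: "t ^ m - inverse (t ^ m) = of_real (real m) * (t - inverse t)"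
    by (simp add: s_def power_inverse)
  have lt: "cmod (t ^ m - t) < cmod (t * t ^ m - 1)"
    by (rule norm_power_diff_lt_norm_mult_power_diff_one[OF \<open>t \<noteq> 0\<close> \<open>t\<^sup>2 \<noteq> 1\<close> _ _ diff])
      (simp_all add: m_def)
  have "t ^ m \<noteq> t" \<comment> \<open>i.e. S_j(\<omega>) \<noteq> 0, so the quotient is not the junk value x / 0 = 0\<close>
  proof
    assume "t ^ m = t"
    then have "of_nat (2 * j + 2) * (t - s) = 0"
      using diff by (simp add: m_def s_def algebra_simps)
    then have "t - s = 0" by (simp only: mult_eq_0_iff of_nat_eq_0_iff) simp
    then show False using \<open>t \<noteq> s\<close> by simp
  qed
  have "poly (cheb_S_nat (Suc j)) \<omega> / poly (cheb_S_nat j) \<omega> = (t * t ^ m - 1) / (t ^ m - t)"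
    using cheb_S_nat_ratio_joukowski[OF ts \<open>t \<noteq> s\<close>] unfolding \<omega> m_def s_def .
  with lt \<open>t ^ m \<noteq> t\<close> show ?thesis
    by (simp add: norm_divide)
qed

lemma cheb_S_of_nat: "cheb_S (int k) = cheb_S_nat k"
  by (simp add: cheb_S_def)

lemma cheb_S_of_nat_Suc_minus_one: "cheb_S (int (Suc j) - 1) = cheb_S_nat j"
  by (simp add: cheb_S_def)

lemma cheb_S_neg: "cheb_S (- int k - 2) = - cheb_S_nat k"
  by (simp add: cheb_S_def)

lemma cheb_S_neg_minus_one: "cheb_S (- int j - 2 - 1) = - cheb_S_nat (Suc j)"
proof -
  have "- int j - 2 - 1 = - int (Suc j) - 2" by simp
  then show ?thesis by (simp only: cheb_S_neg)
qed

lemma Delta_of_nat_Suc: "Delta (int (Suc j)) = (\<Sum>k\<le>j. cheb_S_nat k ^ 2)"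
  unfolding Delta_def cheb_S_of_nat_Suc_minus_one cheb_S_of_nat
  by (rule cheb_S_nat_christoffel_darboux)

lemma Delta_neg: "Delta (- int j - 2) = - Delta (int (Suc j))"
  unfolding Delta_def cheb_S_neg_minus_one cheb_S_of_nat_Suc_minus_one cheb_S_neg cheb_S_of_nat
  by (simp add: pderiv_minus algebra_simps)

lemma h_neg: "h (- int j - 2) \<omega> = inverse (h (int (Suc j)) \<omega>)"
  unfolding h_def cheb_S_neg_minus_one cheb_S_of_nat_Suc_minus_one cheb_S_neg cheb_S_of_nat
  by simp

lemma norm_h_gt_one_at_Delta_root:
  assumes "poly (Delta (int (Suc j))) \<omega> = 0"
  shows "1 < cmod (h (int (Suc j)) \<omega>)"
  using norm_cheb_S_nat_ratio_gt_one assms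
  unfolding Delta_of_nat_Suc h_def cheb_S_of_nat_Suc_minus_one cheb_S_of_nat
  by (simp add: poly_sum)

theorem lemma5p4:
  fixes n :: int and \<omega> :: complex
  assumes "poly (Delta n) \<omega> = 0"
  shows "(n > 0 \<longrightarrow> cmod (h n \<omega>) > 1) \<and> (n < 0 \<longrightarrow> cmod (h n \<omega>) < 1)"
proof (intro conjI impI)
  assume "n > 0"
  then obtain j where "n = int (Suc j)" by (metis gr0_implies_Suc pos_int_cases)
  with assms norm_h_gt_one_at_Delta_root show "cmod (h n \<omega>) > 1" by blast
next
  assume "n < 0"
  show "cmod (h n \<omega>) < 1"
  proof (cases "n = -1")
    case True
    then show ?thesis by (simp add: h_def cheb_S_def)
  next
    case False
    define j where "j = nat (- n - 2)"
    have n: "n = - int j - 2" using \<open>n < 0\<close> False unfolding j_def by linarith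
    have "poly (Delta (int (Suc j))) \<omega> = 0"
      using assms unfolding n Delta_neg by simp
    then have "1 < cmod (h (int (Suc j)) \<omega>)" by (rule norm_h_gt_one_at_Delta_root)
    then show ?thesis
      unfolding n h_neg by (simp add: norm_inverse inverse_less_1_iff)
  qed
qed

end
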